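(* Let $\alpha$ be a graph function on a strongly connected digraph $G$, and let $r,s$ be raising vectors obtained from $\alpha$ via two (possibly different) finite sequences of raising operations. Suppose $r\le s$ coordinatewise, and let $r',s'$ be the raising vectors obtained from $r,s$ respectively after one additional raising operation at a common vertex $v$. Then $r'\le s'$.
   Context: $G$ is a strongly connected directed graph (self-loops allowed); a graph function assigns a real weight $\alpha_{uv}$ to each edge. For a graph function $\beta$, $\beta_v^{\text{in}}=\max_{u:(u,v)\in G}\beta_{uv}$, $\beta_v^{\text{out}}=\max_{w:(v,w)\in G}\beta_{vw}$, $\rho^R_v=\max\{0,\beta_v^{\text{out}}-\beta_v^{\text{in}}\}$. A raising operation at $v$: if $\rho^R_v>0$, add $\rho^R_v/2$ to each $\beta_{uv}$ ($u\ne v$) and subtract it from each $\beta_{vw}$ ($w\ne v$); otherwise do nothing. The raising vector of a sequence of raising operations starting at $\alpha$ starts at $0$ and, at each operation at vertex $v$, increases its $v$-coordinate by the current $\rho^R_v/2$; the current graph function is then $\beta_{uv}=\alpha_{uv}+r_v-r_u$ where $r$ is the current raising vector. *)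

theory Defs
  imports Complex_Main
begin

definition strongly_connected :: "'a set \<Rightarrow> ('a \<times> 'a) set \<Rightarrow> bool" where
  "strongly_connected V E \<longleftrightarrow> finite V \<and> V \<noteq> {} \<and> E \<subseteq> V \<times> V \<and>
     (\<forall>u\<in>V. \<forall>w\<in>V. (u, w) \<in> E\<^sup>*)"

definition cur :: "('a \<Rightarrow> 'a \<Rightarrow> real) \<Rightarrow> ('a \<Rightarrow> real) \<Rightarrow> 'a \<Rightarrow> 'a \<Rightarrow> real" where
  "cur \<alpha> r u w = \<alpha> u w + r w - r u"

definition beta_in :: "('a \<times> 'a) set \<Rightarrow> ('a \<Rightarrow> 'a \<Rightarrow> real) \<Rightarrow> 'a \<Rightarrow> real" where
  "beta_in E \<beta> v = Max {\<beta> u v | u. (u, v) \<in> E}"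

definition beta_out :: "('a \<times> 'a) set \<Rightarrow> ('a \<Rightarrow> 'a \<Rightarrow> real) \<Rightarrow> 'a \<Rightarrow> real" where
  "beta_out E \<beta> v = Max {\<beta> v w | w. (v, w) \<in> E}"

definition rhoR :: "('a \<times> 'a) set \<Rightarrow> ('a \<Rightarrow> 'a \<Rightarrow> real) \<Rightarrow> 'a \<Rightarrow> real" where
  "rhoR E \<beta> v = max 0 (beta_out E \<beta> v - beta_in E \<beta> v)"

definition raise :: "('a \<times> 'a) set \<Rightarrow> ('a \<Rightarrow> 'a \<Rightarrow> real) \<Rightarrow> ('a \<Rightarrow> real) \<Rightarrow> 'a \<Rightarrow> ('a \<Rightarrow> real)" where
  "raise E \<alpha> r v = r(v := r v + rhoR E (cur \<alpha> r) v / 2)"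

inductive raising_vector :: "'a set \<Rightarrow> ('a \<times> 'a) set \<Rightarrow> ('a \<Rightarrow> 'a \<Rightarrow> real) \<Rightarrow> ('a \<Rightarrow> real) \<Rightarrow> bool"
  for V E \<alpha> where
  init: "raising_vector V E \<alpha> (\<lambda>_. 0)"
| step: "raising_vector V E \<alpha> r \<Longrightarrow> v \<in> V \<Longrightarrow> raising_vector V E \<alpha> (raise E \<alpha> r v)"

end

theory Submission
  imports Defs
begin

text \<open>Writing \<open>d = s v - r v \<ge> 0\<close>, passing from \<open>r\<close> to \<open>s\<close> raises every outgoing weight
  \<open>\<alpha> v w + r w - r v\<close> of \<open>v\<close> by at least \<open>-d\<close> and every incoming weight \<open>\<alpha> u v + r v - r u\<close>
  by at most \<open>d\<close>.  Hence \<open>\<rho>\<^sup>R\<^sub>v\<close> drops by at most \<open>2d\<close>, and the new \<open>v\<close>-coordinate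
  \<open>r v + \<rho>\<^sup>R\<^sub>v/2\<close> cannot overtake \<open>s v + \<rho>\<^sup>R\<^sub>v/2\<close>.\<close>

lemma strongly_connected_finite_edges:
  "strongly_connected V E \<Longrightarrow> finite E"
  unfolding strongly_connected_def by (meson finite_SigmaI finite_subset)

lemma finite_out_values: "finite E \<Longrightarrow> finite {f w | w. (v, w) \<in> E}"
  by (rule finite_subset[of _ "(\<lambda>p. f (snd p)) ` E"]) force+

lemma finite_in_values: "finite E \<Longrightarrow> finite {f u | u. (u, v) \<in> E}"
  by (rule finite_subset[of _ "(\<lambda>p. f (fst p)) ` E"]) force+

text \<open>With no edge at \<open>v\<close> both sides are the same unspecified \<open>Max {}\<close>; the shift is
  stated additively so that this case is covered by \<open>r v \<le> s v\<close>.\<close>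

lemma beta_out_cur_le:
  assumes "finite E" and "r v \<le> s v" and "\<And>w. (v, w) \<in> E \<Longrightarrow> r w \<le> s w"
  shows "beta_out E (cur \<alpha> r) v \<le> beta_out E (cur \<alpha> s) v + (s v - r v)"
proof (cases "\<exists>w. (v, w) \<in> E")
  case True
  have bound: "cur \<alpha> s v w \<le> beta_out E (cur \<alpha> s) v" if "(v, w) \<in> E" for w
    unfolding beta_out_def using that by (intro Max_ge[OF finite_out_values[OF \<open>finite E\<close>]]) blast
  show ?thesis
    unfolding beta_out_def[of E "cur \<alpha> r"]
  proof (subst Max_le_iff)
    show "\<forall>x\<in>{cur \<alpha> r v w | w. (v, w) \<in> E}. x \<le> beta_out E (cur \<alpha> s) v + (s v - r v)"
      using bound assms(3) by (fastforce simp: cur_def)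
  qed (use True finite_out_values[OF \<open>finite E\<close>] in auto)
next
  case False
  then show ?thesis using assms(2) by (simp add: beta_out_def)
qed

lemma beta_in_cur_le:
  assumes "finite E" and "r v \<le> s v" and "\<And>u. (u, v) \<in> E \<Longrightarrow> r u \<le> s u"
  shows "beta_in E (cur \<alpha> s) v \<le> beta_in E (cur \<alpha> r) v + (s v - r v)"
proof (cases "\<exists>u. (u, v) \<in> E")
  case True
  have bound: "cur \<alpha> r u v \<le> beta_in E (cur \<alpha> r) v" if "(u, v) \<in> E" for u
    unfolding beta_in_def using that by (intro Max_ge[OF finite_in_values[OF \<open>finite E\<close>]]) blast
  show ?thesis
    unfolding beta_in_def[of E "cur \<alpha> s"]
  proof (subst Max_le_iff)
    show "\<forall>x\<in>{cur \<alpha> s u v | u. (u, v) \<in> E}. x \<le> beta_in E (cur \<alpha> r) v + (s v - r v)"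
      using bound assms(3) by (fastforce simp: cur_def)
  qed (use True finite_in_values[OF \<open>finite E\<close>] in auto)
next
  case False
  then show ?thesis using assms(2) by (simp add: beta_in_def)
qed

lemma rhoR_cur_le:
  assumes "finite E" and "E \<subseteq> V \<times> V" and "\<forall>x\<in>V. r x \<le> s x" and "v \<in> V"
  shows "rhoR E (cur \<alpha> r) v \<le> rhoR E (cur \<alpha> s) v + 2 * (s v - r v)"
proof -
  have "r v \<le> s v" using assms(3,4) by blast
  moreover have "beta_out E (cur \<alpha> r) v \<le> beta_out E (cur \<alpha> s) v + (s v - r v)"
    using assms by (intro beta_out_cur_le) blast+
  moreover have "beta_in E (cur \<alpha> s) v \<le> beta_in E (cur \<alpha> r) v + (s v - r v)"
    using assms by (intro beta_in_cur_le) blast+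
  ultimately show ?thesis unfolding rhoR_def by (auto simp: max_def)
qed

lemma raise_mono:
  assumes "finite E" and "E \<subseteq> V \<times> V" and "\<forall>x\<in>V. r x \<le> s x" and "v \<in> V"
  shows "\<forall>x\<in>V. raise E \<alpha> r v x \<le> raise E \<alpha> s v x"
  using rhoR_cur_le[OF assms, of \<alpha>] assms(3) by (simp add: raise_def)

theorem lemma2:
  fixes V :: "'a set" and E :: "('a \<times> 'a) set" and \<alpha> :: "'a \<Rightarrow> 'a \<Rightarrow> real"
    and r s :: "'a \<Rightarrow> real" and v :: 'a
  assumes "strongly_connected V E"
    and "raising_vector V E \<alpha> r"
    and "raising_vector V E \<alpha> s"
    and "\<forall>x\<in>V. r x \<le> s x"
    and "v \<in> V"
  shows "\<forall>x\<in>V. raise E \<alpha> r v x \<le> raise E \<alpha> s v x"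
proof (rule raise_mono)
  show "finite E" using assms(1) by (rule strongly_connected_finite_edges)
  show "E \<subseteq> V \<times> V" using assms(1) by (simp add: strongly_connected_def)
qed (use assms(4,5) in auto)

end
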